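(* Let $\mathbf B\in\mathbb R_+^{m\times n}$, $\mathbf d\in\mathbb R^n_+$ and $\mathcal J\subseteq[m]$. For $\mathbf h\in\mathbb R^m_+$ let $z(\mathbf h)=\min_{\mathbf y\ge\mathbf 0}\{\mathbf d^T\mathbf y \mid \mathbf B\mathbf y\ge\mathbf h\}$, and for $\mathcal W\subseteq[m]$ write $z(\mathcal W)=z(\sum_{i\in\mathcal W}\mathbf e_i)$. Suppose there exist $\gamma>0$ and $w_i\in(0,1]$ for all $i\in\mathcal J$ such that: (1) for all $i\in\mathcal J$, $\dfrac{z(\mathbf e_i)}{w_i}>4\gamma\cdot\dfrac{\log n}{\log\log n}$; (2) for all $\mathcal W\subseteq\mathcal J$, $\sum_{i\in\mathcal W}w_i\le 1$ implies $z(\mathcal W)\le\gamma$. Then $z(\mathcal J)\le 4\gamma\cdot\dfrac{\log n}{\log\log n}$.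
   Context: $\mathbf e_i$ denotes the $i$-th standard basis vector of $\mathbb R^m$; $n$ is the number of columns of $\mathbf B$. *)

theory Defs
  imports Complex_Main "HOL-Library.Extended_Real"
begin

text \<open>B is an m x n matrix (rows indexed by i < m, columns by j < n),
  d a cost vector of length n, h a right-hand side of length m.
  z(h) = min { d^T y | y >= 0, B y >= h }, taken in the extended reals
  (infimum of the empty set, i.e. an infeasible LP, is +infinity).\<close>
definition lp_val :: "nat \<Rightarrow> nat \<Rightarrow> (nat \<Rightarrow> nat \<Rightarrow> real) \<Rightarrow> (nat \<Rightarrow> real) \<Rightarrow> (nat \<Rightarrow> real) \<Rightarrow> ereal" where
  "lp_val m n B d h = Inf {ereal (\<Sum>j<n. d j * y j) | y.
      (\<forall>j<n. 0 \<le> y j) \<and> (\<forall>i<m. h i \<le> (\<Sum>j<n. B i j * y j))}"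

definition unit_vec :: "nat \<Rightarrow> nat \<Rightarrow> real" where
  "unit_vec i = (\<lambda>k. if k = i then 1 else 0)"

definition lp_val_set :: "nat \<Rightarrow> nat \<Rightarrow> (nat \<Rightarrow> nat \<Rightarrow> real) \<Rightarrow> (nat \<Rightarrow> real) \<Rightarrow> nat set \<Rightarrow> ereal" where
  "lp_val_set m n B d W = lp_val m n B d (\<lambda>k. \<Sum>i\<in>W. unit_vec i k)"

end

theory Submission
  imports Defs "HOL-Analysis.Convex" "HOL-Analysis.Complex_Transcendental" "HOL-Library.Multiset"
begin

(* Suppose z(J) > C = 4 \<gamma> log n / log log n and put a_ij = z(e_i) B_ij / d_j, which lies in [0, 1].
   For every positive weighting p of the columns some row i of J has C sum_j a_ij p_j < z(e_i) sum_j p_j,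
   for otherwise y_j = C p_j / (d_j sum_j p_j) would be a feasible solution of cost at most C.
   Using this as an oracle, multiplicative weights with rate \<eta> = log log n picks rows of J, with
   repetition, until their total value sum z(e_i) exceeds C - \<gamma>; the potential
   sum_j exp (\<eta> sum_i a_ij) keeps every column load sum_i a_ij below (2 log n - 1) / \<eta>.
   Dividing by this bound turns the picked rows into a dual solution, so the set W of picked rows
   has z(W) > \<gamma>, whereas sum_{i \<in> W} w_i \<le> sum_i z(e_i) / C \<le> 1 by (1), contradicting (2). *)

lemma sum_mset_conv_sum_count:
  "(\<Sum>x\<in>#M. f x) = (\<Sum>x\<in>set_mset M. of_nat (count M x) * f x)"
proof (induction M)
  case (add x M)
  have "(\<Sum>y\<in>set_mset (add_mset x M). of_nat (count (add_mset x M) y) * f y)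
      = (\<Sum>y\<in>insert x (set_mset M). (if y = x then f x else 0) + of_nat (count M y) * f y)"
    by (intro sum.cong) (auto simp: algebra_simps)
  also have "\<dots> = f x + (\<Sum>y\<in>set_mset M. of_nat (count M y) * f y)"
    by (cases "x \<in># M") (simp_all add: sum.distrib insert_absorb not_in_iff)
  finally show ?case
    using add.IH by simp
qed simp

lemma sum_set_mset_le_sum_mset:
  fixes f :: "'a \<Rightarrow> 'b::linordered_semidom"
  assumes "\<And>x. x \<in># M \<Longrightarrow> 0 \<le> f x"
  shows "(\<Sum>x\<in>set_mset M. f x) \<le> (\<Sum>x\<in>#M. f x)"
  unfolding sum_mset_conv_sum_count
proof (intro sum_mono)
  fix x assume "x \<in> set_mset M"
  then have "1 \<le> (of_nat (count M x) :: 'b)"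
    by simp
  with assms \<open>x \<in> set_mset M\<close> show "f x \<le> of_nat (count M x) * f x"
    using mult_right_mono[of 1 "of_nat (count M x)" "f x"] by simp
qed

lemma exp_mult_le_chord:
  fixes a t :: real
  assumes "0 \<le> a" and "a \<le> 1"
  shows "exp (t * a) \<le> 1 + a * (exp t - 1)"
proof -
  have "exp ((1 - a) *\<^sub>R 0 + a *\<^sub>R t) \<le> (1 - a) * exp 0 + a * exp t"
    using assms by (intro convex_onD[OF exp_convex]) auto
  then show ?thesis
    by (simp add: algebra_simps)
qed

section \<open>Multiplicative weights against an undercovering oracle\<close>

locale covering_oracle =
  fixes J :: "'a set" and n :: nat and a :: "'a \<Rightarrow> nat \<Rightarrow> real"
    and z :: "'a \<Rightarrow> real" and C :: real
  assumes finite_J: "finite J"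
    and a_nonneg: "\<And>i j. i \<in> J \<Longrightarrow> j < n \<Longrightarrow> 0 \<le> a i j"
    and a_le_1: "\<And>i j. i \<in> J \<Longrightarrow> j < n \<Longrightarrow> a i j \<le> 1"
    and z_pos: "\<And>i. i \<in> J \<Longrightarrow> 0 < z i"
    and C_pos: "0 < C"
    and exists_undercovered: "\<And>p. \<forall>j<n. 0 < p j \<Longrightarrow>
      \<exists>i\<in>J. C * (\<Sum>j<n. a i j * p j) < z i * (\<Sum>j<n. p j)"
begin

definition potential :: "real \<Rightarrow> 'a multiset \<Rightarrow> real" where
  "potential \<eta> M = (\<Sum>j<n. exp (\<eta> * (\<Sum>i\<in>#M. a i j)))"

definition admissible :: "real \<Rightarrow> 'a multiset \<Rightarrow> bool" where
  "admissible \<eta> M \<longleftrightarrow> set_mset M \<subseteq> J \<and> (\<Sum>i\<in>#M. z i) \<le> C \<and>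
     potential \<eta> M \<le> n * exp ((exp \<eta> - 1) * (\<Sum>i\<in>#M. z i) / C)"

lemma n_pos: "0 < n"
  using exists_undercovered[of "\<lambda>_. 1"] by (cases n) auto

lemma potential_pos: "0 < potential \<eta> M"
  unfolding potential_def using n_pos by (intro sum_pos) auto

lemma admissible_empty: "admissible \<eta> {#}"
  using C_pos by (simp add: admissible_def potential_def)

lemma potential_add_mset_le:
  assumes "i \<in> J" and "0 \<le> \<eta>"
    and undercovered: "C * (\<Sum>j<n. a i j * exp (\<eta> * (\<Sum>k\<in>#M. a k j))) \<le> z i * potential \<eta> M"
  shows "potential \<eta> (add_mset i M) \<le> potential \<eta> M * exp ((exp \<eta> - 1) * z i / C)"
proof -
  define p where "p j = exp (\<eta> * (\<Sum>k\<in>#M. a k j))" for j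
  have potential_p: "potential \<eta> M = (\<Sum>j<n. p j)"
    by (simp add: potential_def p_def)
  have "potential \<eta> (add_mset i M) = (\<Sum>j<n. p j * exp (\<eta> * a i j))"
    by (simp add: potential_def p_def distrib_left exp_add mult.commute)
  also have "\<dots> \<le> (\<Sum>j<n. p j * (1 + a i j * (exp \<eta> - 1)))"
    using \<open>i \<in> J\<close> by (intro sum_mono mult_left_mono exp_mult_le_chord a_nonneg a_le_1)
      (auto simp: p_def)
  also have "\<dots> = potential \<eta> M + (exp \<eta> - 1) * (\<Sum>j<n. a i j * p j)"
    by (simp add: potential_p distrib_left sum.distrib sum_distrib_left mult_ac)
  also have "\<dots> \<le> potential \<eta> M + (exp \<eta> - 1) * (z i * potential \<eta> M / C)"
    using undercovered C_pos \<open>0 \<le> \<eta>\<close>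
    by (intro add_left_mono mult_left_mono) (auto simp: p_def pos_le_divide_eq mult.commute)
  also have "\<dots> = potential \<eta> M * (1 + (exp \<eta> - 1) * z i / C)"
    by (simp add: algebra_simps)
  also have "\<dots> \<le> potential \<eta> M * exp ((exp \<eta> - 1) * z i / C)"
    using potential_pos[of \<eta> M]
    by (intro mult_left_mono) (auto simp: add.commute exp_ge_add_one_self)
  finally show ?thesis .
qed

lemma admissible_add_mset:
  assumes "0 \<le> \<eta>" and "admissible \<eta> M" and "(\<Sum>k\<in>#M. z k) \<le> C - \<gamma>"
    and z_le: "\<And>i. i \<in> J \<Longrightarrow> z i \<le> \<gamma>"
  obtains i where "i \<in> J" and "admissible \<eta> (add_mset i M)"
proof -
  obtain i where "i \<in> J"
    and "C * (\<Sum>j<n. a i j * exp (\<eta> * (\<Sum>k\<in>#M. a k j))) < z i * potential \<eta> M"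
    using exists_undercovered[of "\<lambda>j. exp (\<eta> * (\<Sum>k\<in>#M. a k j))"]
    by (auto simp: potential_def)
  with \<open>0 \<le> \<eta>\<close> have "potential \<eta> (add_mset i M)
      \<le> potential \<eta> M * exp ((exp \<eta> - 1) * z i / C)"
    by (intro potential_add_mset_le) auto
  also have "\<dots> \<le> n * exp ((exp \<eta> - 1) * (\<Sum>k\<in>#M. z k) / C) * exp ((exp \<eta> - 1) * z i / C)"
    using \<open>admissible \<eta> M\<close> by (intro mult_right_mono) (auto simp: admissible_def)
  also have "\<dots> = n * exp ((exp \<eta> - 1) * (\<Sum>k\<in>#add_mset i M. z k) / C)"
    by (simp add: exp_add[symmetric] add_divide_distrib distrib_left add.commute)
  finally have "admissible \<eta> (add_mset i M)"
    using assms(2,3) z_le[OF \<open>i \<in> J\<close>] \<open>i \<in> J\<close> by (auto simp: admissible_def)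
  with \<open>i \<in> J\<close> show thesis
    by (rule that)
qed

lemma admissible_load_le:
  assumes "admissible \<eta> M" and "0 \<le> \<eta>" and "j < n"
  shows "\<eta> * (\<Sum>i\<in>#M. a i j) \<le> ln n + (exp \<eta> - 1)"
proof -
  have "(exp \<eta> - 1) * (\<Sum>i\<in>#M. z i) \<le> (exp \<eta> - 1) * C"
    using assms(1,2) by (intro mult_left_mono) (auto simp: admissible_def)
  then have ratio: "(exp \<eta> - 1) * (\<Sum>i\<in>#M. z i) / C \<le> exp \<eta> - 1"
    using C_pos by (simp add: divide_le_eq)
  have "exp (\<eta> * (\<Sum>i\<in>#M. a i j)) \<le> potential \<eta> M"
    unfolding potential_def using \<open>j < n\<close> by (intro member_le_sum) auto
  also have "\<dots> \<le> n * exp ((exp \<eta> - 1) * (\<Sum>i\<in>#M. z i) / C)"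
    using assms(1) by (simp add: admissible_def)
  also have "\<dots> \<le> n * exp (exp \<eta> - 1)"
    using ratio by (intro mult_left_mono) auto
  also have "\<dots> = exp (ln n + (exp \<eta> - 1))"
    using n_pos by (simp add: exp_add)
  finally show ?thesis
    by simp
qed

lemma exists_admissible_heavy:
  assumes "0 \<le> \<eta>" and z_le: "\<And>i. i \<in> J \<Longrightarrow> z i \<le> \<gamma>"
  obtains M where "admissible \<eta> M" and "C - \<gamma> < (\<Sum>i\<in>#M. z i)"
proof -
  obtain e where "0 < e" and e_le: "\<And>i. i \<in> J \<Longrightarrow> e \<le> z i"
  proof
    show "0 < Min (insert 1 (z ` J))"
      using finite_J z_pos by (subst Min_gr_iff) auto
    show "Min (insert 1 (z ` J)) \<le> z i" if "i \<in> J" for i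
      using finite_J that by (intro Min_le) auto
  qed
  have "\<exists>M. admissible \<eta> M \<and> (C - \<gamma> < (\<Sum>i\<in>#M. z i) \<or> size M = k)" for k
  proof (induction k)
    case (Suc k)
    then obtain M where "admissible \<eta> M" and M: "C - \<gamma> < (\<Sum>i\<in>#M. z i) \<or> size M = k"
      by blast
    show ?case
    proof (cases "C - \<gamma> < (\<Sum>i\<in>#M. z i)")
      case False
      then obtain i where "admissible \<eta> (add_mset i M)"
        using admissible_add_mset[OF \<open>0 \<le> \<eta>\<close> \<open>admissible \<eta> M\<close> _ z_le] by force
      with False M show ?thesis
        by auto
    qed (use \<open>admissible \<eta> M\<close> in blast)
  qed (use admissible_empty in auto)
  moreover obtain k :: nat where "C < k * e"
    using reals_Archimedean3[OF \<open>0 < e\<close>] by blast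
  ultimately obtain M where "admissible \<eta> M" and M: "C - \<gamma> < (\<Sum>i\<in>#M. z i) \<or> size M = k"
    by blast
  \<comment> \<open>every row has value at least e, so k rows would already exceed C\<close>
  have "C - \<gamma> < (\<Sum>i\<in>#M. z i)"
  proof (rule ccontr)
    assume "\<not> ?thesis"
    with M have "k * e = (\<Sum>i\<in>#M. e)"
      by simp
    also have "\<dots> \<le> (\<Sum>i\<in>#M. z i)"
      using \<open>admissible \<eta> M\<close> e_le by (intro sum_mset_mono) (auto simp: admissible_def)
    finally show False
      using \<open>C < k * e\<close> \<open>admissible \<eta> M\<close> by (simp add: admissible_def)
  qed
  with \<open>admissible \<eta> M\<close> show thesis
    by (rule that)
qed

theorem exists_heavy_packing:
  assumes "0 < \<eta>" and "\<And>i. i \<in> J \<Longrightarrow> z i \<le> \<gamma>"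
  obtains M where "set_mset M \<subseteq> J" and "C - \<gamma> < (\<Sum>i\<in>#M. z i)" and "(\<Sum>i\<in>#M. z i) \<le> C"
    and "\<And>j. j < n \<Longrightarrow> \<eta> * (\<Sum>i\<in>#M. a i j) \<le> ln n + (exp \<eta> - 1)"
proof -
  obtain M where "admissible \<eta> M" and "C - \<gamma> < (\<Sum>i\<in>#M. z i)"
    using exists_admissible_heavy assms less_imp_le by blast
  with admissible_load_le \<open>0 < \<eta>\<close> that show thesis
    by (auto simp: admissible_def)
qed

end

section \<open>The covering LP\<close>

lemma lp_val_le:
  assumes "\<forall>j<n. 0 \<le> y j" and "\<forall>i<m. h i \<le> (\<Sum>j<n. B i j * y j)"
  shows "lp_val m n B d h \<le> ereal (\<Sum>j<n. d j * y j)"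
  unfolding lp_val_def using assms by (intro Inf_lower) blast

lemma lp_val_nonneg:
  assumes "\<forall>j<n. 0 \<le> d j"
  shows "0 \<le> lp_val m n B d h"
  unfolding lp_val_def using assms by (auto intro!: Inf_greatest sum_nonneg)

lemma sum_unit_vec: "finite W \<Longrightarrow> (\<Sum>i\<in>W. unit_vec i k) = (if k \<in> W then 1 else 0)"
  unfolding unit_vec_def by (simp add: sum.delta)

lemma lp_val_set_singleton: "lp_val_set m n B d {i} = lp_val m n B d (unit_vec i)"
  unfolding lp_val_set_def by simp

lemma lp_val_set_le:
  assumes "finite W" and "\<forall>i<m. \<forall>j<n. 0 \<le> B i j" and "\<forall>j<n. 0 \<le> y j"
    and "\<forall>i\<in>W. 1 \<le> (\<Sum>j<n. B i j * y j)"
  shows "lp_val_set m n B d W \<le> ereal (\<Sum>j<n. d j * y j)"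
  unfolding lp_val_set_def using assms
  by (intro lp_val_le) (auto simp: sum_unit_vec intro!: sum_nonneg)

lemma lp_val_set_ge_dual:
  assumes "finite W" and "W \<subseteq> {..<m}" and c_nonneg: "\<forall>i\<in>W. 0 \<le> c i"
    and dual_feasible: "\<forall>j<n. (\<Sum>i\<in>W. c i * B i j) \<le> d j"
  shows "ereal (\<Sum>i\<in>W. c i) \<le> lp_val_set m n B d W"
  unfolding lp_val_set_def lp_val_def
proof (rule Inf_greatest, clarify)
  fix y assume y: "\<forall>j<n. 0 \<le> y j"
    and cover: "\<forall>i<m. (\<Sum>k\<in>W. unit_vec k i) \<le> (\<Sum>j<n. B i j * y j)"
  have covered: "1 \<le> (\<Sum>j<n. B i j * y j)" if "i \<in> W" for i
    using cover sum_unit_vec[OF \<open>finite W\<close>] \<open>W \<subseteq> {..<m}\<close> that by force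
  have "(\<Sum>i\<in>W. c i) \<le> (\<Sum>i\<in>W. c i * (\<Sum>j<n. B i j * y j))"
    using covered c_nonneg mult_left_mono[of 1] by (intro sum_mono) fastforce
  also have "\<dots> = (\<Sum>j<n. (\<Sum>i\<in>W. c i * B i j) * y j)"
    by (simp add: sum_distrib_left sum_distrib_right mult.assoc sum.swap[where A = W])
  also have "\<dots> \<le> (\<Sum>j<n. d j * y j)"
    using dual_feasible y by (intro sum_mono mult_right_mono) auto
  finally show "ereal (\<Sum>i\<in>W. c i) \<le> ereal (\<Sum>j<n. d j * y j)"
    by simp
qed

lemma lp_val_set_mset_ge_dual:
  assumes "set_mset M \<subseteq> {..<m}" and "\<forall>i\<in>#M. 0 \<le> c i"
    and "\<forall>j<n. (\<Sum>i\<in>#M. c i * B i j) \<le> d j"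
  shows "ereal (\<Sum>i\<in>#M. c i) \<le> lp_val_set m n B d (set_mset M)"
  using lp_val_set_ge_dual[of "set_mset M" m "\<lambda>i. of_nat (count M i) * c i" n B d] assms
  by (simp add: sum_mset_conv_sum_count mult.assoc)

lemma lp_val_unit_vec_mult_le:
  assumes B_nonneg: "\<forall>k<m. 0 \<le> B k j" and "0 \<le> d j" and "i < m" and "j < n"
    and "lp_val m n B d (unit_vec i) = ereal c"
  shows "c * B i j \<le> d j"
proof (cases "B i j = 0")
  case False
  with B_nonneg \<open>i < m\<close> have B_pos: "0 < B i j"
    by fastforce
  define y where "y k = (if k = j then 1 / B i j else 0)" for k
  have sum_y: "(\<Sum>k<n. f k * y k) = f j / B i j" for f :: "nat \<Rightarrow> real"
    using \<open>j < n\<close> by (simp add: y_def if_distrib cong: if_cong)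
  have "lp_val m n B d (unit_vec i) \<le> ereal (\<Sum>k<n. d k * y k)"
  proof (rule lp_val_le)
    show "\<forall>k<n. 0 \<le> y k"
      using B_pos by (simp add: y_def)
    show "\<forall>k<m. unit_vec i k \<le> (\<Sum>l<n. B k l * y l)"
      using B_pos B_nonneg by (simp add: sum_y unit_vec_def)
  qed
  with assms(5) have "c \<le> d j / B i j"
    by (simp add: sum_y)
  with B_pos show ?thesis
    by (simp add: pos_le_divide_eq)
qed (use \<open>0 \<le> d j\<close> in simp)

text \<open>With \<open>z i = z(e\<^sub>i)\<close>, entry \<open>(i, j)\<close> is the share of the cost of column \<open>j\<close> that
  row \<open>i\<close> alone is worth.  Columns of cost 0 get 0, which is harmless: they cannot meet a row of
  positive value.\<close>

definition scaled_matrix ::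
    "(nat \<Rightarrow> nat \<Rightarrow> real) \<Rightarrow> (nat \<Rightarrow> real) \<Rightarrow> (nat \<Rightarrow> real) \<Rightarrow> nat \<Rightarrow> nat \<Rightarrow> real" where
  "scaled_matrix B d z i j = (if d j = 0 then 0 else z i * B i j / d j)"

lemma scaled_matrix_bounds:
  assumes "0 \<le> z i * B i j" and "z i * B i j \<le> d j"
  shows "0 \<le> scaled_matrix B d z i j" and "scaled_matrix B d z i j \<le> 1"
    and "scaled_matrix B d z i j * d j = z i * B i j"
  using assms by (auto simp: scaled_matrix_def)

lemma exists_row_undercovered:
  assumes B_nonneg: "\<forall>i<m. \<forall>j<n. 0 \<le> B i j" and d_nonneg: "\<forall>j<n. 0 \<le> d j"
    and "finite J" and "0 < n" and "0 < C" and C_lt: "ereal C < lp_val_set m n B d J"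
    and z_pos: "\<forall>i\<in>J. 0 < z i" and p_pos: "\<forall>j<n. 0 < p j"
  shows "\<exists>i\<in>J. C * (\<Sum>j<n. scaled_matrix B d z i j * p j) < z i * (\<Sum>j<n. p j)"
proof (rule ccontr)
  define P where "P = (\<Sum>j<n. p j)"
  have P_pos: "0 < P"
    unfolding P_def using \<open>0 < n\<close> p_pos by (intro sum_pos) auto
  assume "\<not> ?thesis"
  then have covered: "z i * P \<le> C * (\<Sum>j<n. scaled_matrix B d z i j * p j)" if "i \<in> J" for i
    using that by (force simp: P_def)
  define y where "y j = (if d j = 0 then 0 else C * p j / (P * d j))" for j
  have "lp_val_set m n B d J \<le> ereal (\<Sum>j<n. d j * y j)"
  proof (rule lp_val_set_le)
    show "\<forall>j<n. 0 \<le> y j"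
      using d_nonneg p_pos P_pos \<open>0 < C\<close> by (simp add: y_def less_imp_le)
    show "\<forall>i\<in>J. 1 \<le> (\<Sum>j<n. B i j * y j)"
    proof
      fix i assume "i \<in> J"
      have "(\<Sum>j<n. B i j * y j) = C / (P * z i) * (\<Sum>j<n. scaled_matrix B d z i j * p j)"
        unfolding sum_distrib_left using z_pos \<open>i \<in> J\<close> P_pos
        by (intro sum.cong) (auto simp: y_def scaled_matrix_def field_simps)
      also have "1 \<le> \<dots>"
        using covered[OF \<open>i \<in> J\<close>] z_pos \<open>i \<in> J\<close> P_pos \<open>0 < C\<close> by (simp add: field_simps)
      finally show "1 \<le> (\<Sum>j<n. B i j * y j)" .
    qed
  qed (use assms in auto)
  also have "(\<Sum>j<n. d j * y j) \<le> (\<Sum>j<n. C * p j / P)"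
    using p_pos P_pos \<open>0 < C\<close> by (intro sum_mono) (auto simp: y_def less_imp_le)
  also have "\<dots> = C"
    using P_pos by (simp add: P_def sum_divide_distrib[symmetric] sum_distrib_left[symmetric])
  finally show False
    using C_lt by simp
qed

theorem exists_heavy_rows_of_lp_val_set_gt:
  assumes B_nonneg: "\<forall>i<m. \<forall>j<n. 0 \<le> B i j" and d_nonneg: "\<forall>j<n. 0 \<le> d j"
    and J_sub: "J \<subseteq> {..<m}" and "0 < n" and "0 < C" and "0 < \<eta>"
    and C_lt: "ereal C < lp_val_set m n B d J"
    and z: "\<And>i. i \<in> J \<Longrightarrow> lp_val m n B d (unit_vec i) = ereal (z i) \<and> 0 < z i \<and> z i \<le> \<gamma>"
  obtains M where "set_mset M \<subseteq> J" and "C - \<gamma> < (\<Sum>i\<in>#M. z i)" and "(\<Sum>i\<in>#M. z i) \<le> C"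
    and "ereal (\<eta> * (\<Sum>i\<in>#M. z i) / (ln n + (exp \<eta> - 1))) \<le> lp_val_set m n B d (set_mset M)"
proof -
  have "finite J"
    using J_sub finite_subset by blast
  have col: "0 \<le> z i * B i j" "z i * B i j \<le> d j" if "i \<in> J" and "j < n" for i j
  proof -
    have "i < m"
      using J_sub that(1) by blast
    with z[OF that(1)] B_nonneg d_nonneg that show "0 \<le> z i * B i j" "z i * B i j \<le> d j"
      by (auto intro: lp_val_unit_vec_mult_le[where m = m and n = n])
  qed
  interpret covering_oracle J n "scaled_matrix B d z" z C
  proof
    show "\<exists>i\<in>J. C * (\<Sum>j<n. scaled_matrix B d z i j * p j) < z i * (\<Sum>j<n. p j)"
      if "\<forall>j<n. 0 < p j" for p
      using exists_row_undercovered[OF B_nonneg d_nonneg \<open>finite J\<close> \<open>0 < n\<close> \<open>0 < C\<close> C_lt] z that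
      by blast
  qed (use \<open>finite J\<close> \<open>0 < C\<close> z col scaled_matrix_bounds in auto)
  obtain M where M: "set_mset M \<subseteq> J" "C - \<gamma> < (\<Sum>i\<in>#M. z i)" "(\<Sum>i\<in>#M. z i) \<le> C"
    and load: "\<And>j. j < n \<Longrightarrow> \<eta> * (\<Sum>i\<in>#M. scaled_matrix B d z i j) \<le> ln n + (exp \<eta> - 1)"
    using exists_heavy_packing[OF \<open>0 < \<eta>\<close>, of \<gamma>] z by blast
  define b where "b = (ln n + (exp \<eta> - 1)) / \<eta>"
  have "0 < b"
    unfolding b_def using \<open>0 < n\<close> \<open>0 < \<eta>\<close> by (intro divide_pos_pos add_nonneg_pos) auto
  have "ereal (\<Sum>i\<in>#M. z i / b) \<le> lp_val_set m n B d (set_mset M)"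
  proof (rule lp_val_set_mset_ge_dual)
    show "\<forall>j<n. (\<Sum>i\<in>#M. z i / b * B i j) \<le> d j"
    proof (intro allI impI)
      fix j assume "j < n"
      have "(\<Sum>i\<in>#M. z i / b * B i j) = (\<Sum>i\<in>#M. scaled_matrix B d z i j) * (d j / b)"
        unfolding sum_mset_distrib_right using M(1) col \<open>j < n\<close> scaled_matrix_bounds(3)
        by (intro arg_cong[where f = sum_mset] image_mset_cong) auto
      also have "\<dots> \<le> b * (d j / b)"
        using load[OF \<open>j < n\<close>] \<open>0 < \<eta>\<close> d_nonneg \<open>j < n\<close>
        by (intro mult_right_mono) (auto simp: b_def pos_le_divide_eq mult.commute)
      finally show "(\<Sum>i\<in>#M. z i / b * B i j) \<le> d j"
        using \<open>0 < b\<close> by simp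
    qed
  qed (use M(1) J_sub \<open>0 < b\<close> in \<open>auto intro!: divide_nonneg_pos less_imp_le[OF z_pos]\<close>)
  moreover have "(\<Sum>i\<in>#M. z i / b) = (\<Sum>i\<in>#M. z i) / b"
    by (simp add: divide_inverse sum_mset_distrib_right)
  moreover have "(\<Sum>i\<in>#M. z i) / b = \<eta> * (\<Sum>i\<in>#M. z i) / (ln n + (exp \<eta> - 1))"
    by (simp add: b_def)
  ultimately show thesis
    using M that by simp
qed

lemma one_less_ln_real:
  assumes "3 \<le> n"
  shows "1 < ln (real n)"
proof -
  have "exp 1 < real n"
    using e_less_272 assms by linarith
  then show ?thesis
    using assms ln_less_cancel_iff[of "exp 1" "real n"] by simp
qed

lemma lt_ln_ln_overhead:
  fixes L \<gamma> W :: real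
  assumes "1 < L" and "0 < \<gamma>" and "4 * \<gamma> * (L / ln L) - \<gamma> < W"
  shows "\<gamma> < ln L * W / (L + (L - 1))"
proof -
  have "0 < ln L"
    using \<open>1 < L\<close> by simp
  have "\<gamma> * ln L < \<gamma> * L"
    using assms(1,2) by (simp add: ln_less_self)
  moreover have "(4 * \<gamma> * (L / ln L) - \<gamma>) * ln L = 4 * (\<gamma> * L) - \<gamma> * ln L"
    using \<open>0 < ln L\<close> by (simp add: algebra_simps)
  moreover have "\<gamma> * (L + (L - 1)) = 2 * (\<gamma> * L) - \<gamma>"
    by (simp add: algebra_simps)
  ultimately have "\<gamma> * (L + (L - 1)) < (4 * \<gamma> * (L / ln L) - \<gamma>) * ln L"
    using assms(1,2) by (smt (verit) mult_pos_pos)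
  also have "\<dots> < ln L * W"
    using assms(3) \<open>0 < ln L\<close> by (simp add: mult.commute)
  finally show ?thesis
    using \<open>1 < L\<close> by (simp add: pos_less_divide_eq)
qed

lemma lp_val_unit_vec_values:
  assumes "\<forall>j<n. 0 \<le> d j" and "0 < C" and "\<forall>i\<in>J. 0 < w i"
    and "\<forall>i\<in>J. lp_val_set m n B d {i} \<le> ereal \<gamma>"
    and "\<forall>i\<in>J. ereal C < lp_val m n B d (unit_vec i) / ereal (w i)"
  obtains z where "\<And>i. i \<in> J \<Longrightarrow> lp_val m n B d (unit_vec i) = ereal (z i) \<and> 0 < z i \<and> z i \<le> \<gamma>"
    and "\<And>i. i \<in> J \<Longrightarrow> w i \<le> z i / C"
proof -
  define z where "z i = real_of_ereal (lp_val m n B d (unit_vec i))" for i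
  have "lp_val m n B d (unit_vec i) = ereal (z i) \<and> 0 < z i \<and> z i \<le> \<gamma>" and "w i \<le> z i / C"
    if "i \<in> J" for i
  proof -
    have "0 \<le> lp_val m n B d (unit_vec i)" and le: "lp_val m n B d (unit_vec i) \<le> ereal \<gamma>"
      using lp_val_nonneg assms(1,4) \<open>i \<in> J\<close> by (auto simp: lp_val_set_singleton)
    then have z_eq: "lp_val m n B d (unit_vec i) = ereal (z i)"
      unfolding z_def by (cases "lp_val m n B d (unit_vec i)") auto
    with le have "z i \<le> \<gamma>"
      by simp
    have "ereal C < ereal (z i) / ereal (w i)"
      using assms(5) \<open>i \<in> J\<close> z_eq by metis
    moreover have "w i \<noteq> 0"
      using assms(3) \<open>i \<in> J\<close> by force
    ultimately have "C < z i / w i"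
      by simp
    with assms(3) \<open>i \<in> J\<close> have "C * w i < z i"
      by (simp add: pos_less_divide_eq)
    moreover have "0 < C * w i"
      using assms(2,3) \<open>i \<in> J\<close> by simp
    ultimately show "lp_val m n B d (unit_vec i) = ereal (z i) \<and> 0 < z i \<and> z i \<le> \<gamma>"
      and "w i \<le> z i / C"
      using z_eq \<open>z i \<le> \<gamma>\<close> assms(2) by (simp_all add: pos_le_divide_eq mult.commute)
  qed
  with that show thesis
    by blast
qed

theorem lemma4:
  fixes m n :: nat and B :: "nat \<Rightarrow> nat \<Rightarrow> real" and d :: "nat \<Rightarrow> real"
    and J :: "nat set" and \<gamma> :: real and w :: "nat \<Rightarrow> real"
  assumes B_nonneg: "\<forall>i<m. \<forall>j<n. 0 \<le> B i j"
    and d_nonneg: "\<forall>j<n. 0 \<le> d j"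
    and J_sub: "J \<subseteq> {..<m}"
    and n_ge: "n \<ge> 3"
    and gamma_pos: "\<gamma> > 0"
    and w_range: "\<forall>i\<in>J. 0 < w i \<and> w i \<le> 1"
    and cond1: "\<forall>i\<in>J. lp_val m n B d (unit_vec i) / ereal (w i)
                   > ereal (4 * \<gamma> * (ln (real n) / ln (ln (real n))))"
    and cond2: "\<forall>W. W \<subseteq> J \<longrightarrow> (\<Sum>i\<in>W. w i) \<le> 1 \<longrightarrow> lp_val_set m n B d W \<le> ereal \<gamma>"
  shows "lp_val_set m n B d J \<le> ereal (4 * \<gamma> * (ln (real n) / ln (ln (real n))))"
proof (rule ccontr)
  define L where "L = ln (real n)"
  define C where "C = 4 * \<gamma> * (L / ln L)"
  assume "\<not> ?thesis"
  then have C_lt: "ereal C < lp_val_set m n B d J"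
    by (simp add: C_def L_def)
  have "1 < L"
    using one_less_ln_real[OF n_ge] by (simp add: L_def)
  then have "0 < ln L" and "exp (ln L) = L" and "0 < C"
    using gamma_pos by (simp_all add: C_def)
  obtain z where z: "\<And>i. i \<in> J \<Longrightarrow> lp_val m n B d (unit_vec i) = ereal (z i) \<and> 0 < z i \<and> z i \<le> \<gamma>"
    and w_le: "\<And>i. i \<in> J \<Longrightarrow> w i \<le> z i / C"
  proof (rule lp_val_unit_vec_values[OF d_nonneg \<open>0 < C\<close>])
    show "\<forall>i\<in>J. 0 < w i" and "\<forall>i\<in>J. lp_val_set m n B d {i} \<le> ereal \<gamma>"
      using w_range cond2 by auto
    show "\<forall>i\<in>J. ereal C < lp_val m n B d (unit_vec i) / ereal (w i)"
      using cond1 by (simp add: C_def L_def)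
  qed blast
  obtain M where M: "set_mset M \<subseteq> J" "C - \<gamma> < (\<Sum>i\<in>#M. z i)" "(\<Sum>i\<in>#M. z i) \<le> C"
    and dual: "ereal (ln L * (\<Sum>i\<in>#M. z i) / (L + (L - 1))) \<le> lp_val_set m n B d (set_mset M)"
    using exists_heavy_rows_of_lp_val_set_gt[OF B_nonneg d_nonneg J_sub _ \<open>0 < C\<close> \<open>0 < ln L\<close> C_lt,
        of z \<gamma>] z n_ge \<open>exp (ln L) = L\<close> by (auto simp: L_def)
  have "(\<Sum>i\<in>set_mset M. w i) \<le> (\<Sum>i\<in>#M. w i)"
    using M(1) w_range by (intro sum_set_mset_le_sum_mset) (force simp: less_imp_le)
  also have "\<dots> \<le> (\<Sum>i\<in>#M. z i) / C"
    using M(1) w_le by (auto simp: divide_inverse sum_mset_distrib_right intro!: sum_mset_mono)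
  also have "\<dots> \<le> 1"
    using M(3) \<open>0 < C\<close> by simp
  finally have "lp_val_set m n B d (set_mset M) \<le> ereal \<gamma>"
    using cond2 M(1) by blast
  moreover have "\<gamma> < ln L * (\<Sum>i\<in>#M. z i) / (L + (L - 1))"
    using lt_ln_ln_overhead[OF \<open>1 < L\<close> gamma_pos] M(2) by (simp add: C_def)
  ultimately show False
    using dual by (meson ereal_less_eq(3) leD order.trans)
qed

end
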